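(* Let $D_1\subset\mathbb{R}^2$ be the unit disk and let $u_\star:D_1\setminus\{0\}\to\mathbb{S}^1$ be $u_\star(p)=p/|p|$. Then $$\lim_{s\to1^-}(1-s)^2[u_\star]^2_{H^{\frac{1+s}{2}}(D_1)}=2\pi^2.$$
   Context: For open $\Omega\subset\mathbb{R}^2$, $[u]^2_{H^\alpha(\Omega)}:=\iint_{\Omega\times\Omega}\frac{|u(x)-u(y)|^2}{|x-y|^{2+2\alpha}}\,dx\,dy$. *)

theory Defs
  imports "HOL-Analysis.Analysis"
begin

text \<open>Squared Gagliardo seminorm of order alpha on an open set Omega of R^2
  (nonnegative integrand, so the Lebesgue integral is taken in ennreal;
  it may be infinite).\<close>
definition gagliardo_sq :: "real \<Rightarrow> (real^2) set \<Rightarrow> (real^2 \<Rightarrow> real^2) \<Rightarrow> ennreal" where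
  "gagliardo_sq \<alpha> \<Omega> u =
     (\<integral>\<^sup>+ z. indicator (\<Omega> \<times> \<Omega>) z *
        ennreal ((norm (u (fst z) - u (snd z)))\<^sup>2 / (norm (fst z - snd z)) powr (2 + 2 * \<alpha>))
      \<partial>(lborel \<Otimes>\<^sub>M lborel))"

text \<open>The vortex map p / |p| (its value at the null set {0} is irrelevant).\<close>
definition u_star :: "real^2 \<Rightarrow> real^2" where
  "u_star p = (1 / norm p) *\<^sub>R p"

end

theory Submission
  imports Defs
begin

text \<open>
  For \<open>x \<noteq> 0\<close> and \<open>|h| \<le> \<epsilon> |x|\<close>, the quantity \<open>|u\<^sub>\<star>(x) - u\<^sub>\<star>(x + h)|\<^sup>2\<close> is, up to factors
  \<open>(1 \<plusminus> \<epsilon>)\<^sup>2\<close>, the squared component of \<open>h\<close> orthogonal to \<open>x\<close> divided by \<open>|x|\<^sup>2\<close>. By rotation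
  invariance that component carries half of \<open>|h|\<^sup>2\<close>, so in polar coordinates the part of the
  inner integral over \<open>|h| < \<epsilon> |x|\<close> is \<open>\<pi> (\<epsilon> |x|)\<^bsup>1-s\<^esup> / ((1 \<plusminus> \<epsilon>)\<^sup>2 (1 - s) |x|\<^sup>2)\<close>, while
  \<open>|h| \<ge> \<epsilon> |x|\<close> contributes \<open>O(\<epsilon>\<^bsup>-1-s\<^esup> |x|\<^bsup>-1-s\<^esup>)\<close> without a factor \<open>1/(1 - s)\<close>.
  Hence the inner integral is comparable to \<open>|x|\<^bsup>-1-s\<^esup>\<close>, whose integral over the disk is
  \<open>2\<pi> / (1 - s)\<close>. Multiplying by \<open>(1 - s)\<^sup>2\<close>, the resulting bounds tend to \<open>2\<pi>\<^sup>2 / (1 \<plusminus> \<epsilon>)\<^sup>2\<close>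
  as \<open>s \<rightarrow> 1\<close>; letting \<open>\<epsilon> \<rightarrow> 0\<close> gives \<open>2\<pi>\<^sup>2\<close>.
\<close>

section \<open>Integrals of powers of the norm\<close>

lemma ball_in_borel [measurable]: "ball (c :: 'a :: metric_space) r \<in> sets borel"
  by simp

lemma emeasure_distr_norm_lessThan:
  "emeasure (distr (lborel :: 'a::euclidean_space measure) borel norm) {..<a}
     = ennreal (unit_ball_vol DIM('a) * max a 0 ^ DIM('a))"
proof -
  have "norm -` {..<a} = ball (0::'a) a" by auto
  then have "emeasure (distr (lborel :: 'a measure) borel norm) {..<a} = emeasure lborel (ball (0::'a) a)"
    by (simp add: emeasure_distr)
  then show ?thesis by (cases "a \<le> 0") (auto simp: emeasure_ball max_def ball_empty)
qed

lemma distr_norm_lborel: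
  defines "n \<equiv> DIM('a::euclidean_space)"
  shows "distr (lborel :: 'a measure) borel norm
           = density lborel (\<lambda>r. ennreal (n * unit_ball_vol n * r ^ (n - 1)) * indicator {0..} r)"
    (is "?M = density lborel ?g")
proof (rule measure_eqI_generator_eq_countable[where E="range lessThan" and A="range (\<lambda>k::nat. {..<real k})"])
  have density_lessThan: "emeasure (density lborel ?g) {..<a} = ennreal (unit_ball_vol n * max a 0 ^ n)" for a :: real
  proof -
    have "emeasure (density lborel ?g) {..<a} = (\<integral>\<^sup>+ r. ?g r * indicator {..<a} r \<partial>lborel)"
      by (rule emeasure_density) auto
    also have "\<dots> = (\<integral>\<^sup>+ r. ennreal (n * unit_ball_vol n * r ^ (n - 1)) * indicator {0..max a 0} r \<partial>lborel)"
      by (intro nn_integral_cong_AE, use AE_lborel_singleton[of a] AE_lborel_singleton[of 0] in eventually_elim)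
        (auto split: split_indicator)
    also have "\<dots> = unit_ball_vol n * max a 0 ^ n - unit_ball_vol n * 0 ^ n"
      by (intro nn_integral_FTC_Icc) (auto intro!: derivative_eq_intros simp: n_def)
    finally show ?thesis by (simp add: n_def)
  qed
  show "Int_stable (range lessThan :: real set set)"
  proof (rule Int_stableI, clarify)
    fix a b :: real
    have "{..<a} \<inter> {..<b} = {..<min a b}" by auto
    then show "{..<a} \<inter> {..<b} \<in> range lessThan" by (metis rangeI)
  qed
  show "range lessThan \<subseteq> Pow (UNIV::real set)" by auto
  show "sets ?M = sigma_sets UNIV (range lessThan)" "sets (density lborel ?g) = sigma_sets UNIV (range lessThan)"
    by (simp_all add: borel_Iio)
  show "countable (range (\<lambda>k::nat. {..<real k}))" "range (\<lambda>k::nat. {..<real k}) \<subseteq> range lessThan"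
    by auto
  show "\<Union> (range (\<lambda>k::nat. {..<real k})) = UNIV"
    by (auto intro: reals_Archimedean2)
  show "emeasure ?M X = emeasure (density lborel ?g) X" if "X \<in> range lessThan" for X
    using that emeasure_distr_norm_lessThan density_lessThan by (auto simp: n_def)
  show "emeasure ?M X \<noteq> \<infinity>" if "X \<in> range (\<lambda>k::nat. {..<real k})" for X
    using that emeasure_distr_norm_lessThan[where 'a='a] by auto
qed

lemma nn_integral_norm:
  fixes f :: "real \<Rightarrow> ennreal"
  defines "n \<equiv> DIM('a::euclidean_space)"
  assumes [measurable]: "f \<in> borel_measurable borel"
  shows "(\<integral>\<^sup>+ x. f (norm (x::'a)) \<partial>lborel)
           = (\<integral>\<^sup>+ r. ennreal (n * unit_ball_vol n * r ^ (n - 1)) * indicator {0..} r * f r \<partial>lborel)"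
proof -
  have "(\<integral>\<^sup>+ x. f (norm (x::'a)) \<partial>lborel) = (\<integral>\<^sup>+ r. f r \<partial>distr (lborel :: 'a measure) borel norm)"
    by (simp add: nn_integral_distr)
  then show ?thesis
    by (simp add: distr_norm_lborel nn_integral_density n_def mult.assoc)
qed

lemma nn_integral_radial_powr:
  fixes S :: "real set"
  defines "n \<equiv> DIM('a::euclidean_space)"
  assumes [measurable]: "S \<in> sets borel" and S: "S \<subseteq> {0<..}"
  shows "(\<integral>\<^sup>+ x. indicator S (norm (x::'a)) * ennreal (norm x powr a) \<partial>lborel)
           = (\<integral>\<^sup>+ r. ennreal (n * unit_ball_vol n * r powr (a + n - 1) * indicator S r) \<partial>lborel)"
proof -
  have "(\<integral>\<^sup>+ x. indicator S (norm (x::'a)) * ennreal (norm x powr a) \<partial>lborel)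
      = (\<integral>\<^sup>+ r. ennreal (n * unit_ball_vol n * r ^ (n - 1)) * indicator {0..} r * (indicator S r * ennreal (r powr a)) \<partial>lborel)"
    unfolding n_def by (rule nn_integral_norm) measurable
  also have "\<dots> = (\<integral>\<^sup>+ r. ennreal (n * unit_ball_vol n * r powr (a + n - 1) * indicator S r) \<partial>lborel)"
  proof (rule nn_integral_cong)
    fix r :: real
    show "ennreal (n * unit_ball_vol n * r ^ (n - 1)) * indicator {0..} r * (indicator S r * ennreal (r powr a))
        = ennreal (n * unit_ball_vol n * r powr (a + n - 1) * indicator S r)"
    proof (cases "r \<in> S")
      case True
      then have "r > 0" using S by auto
      have "n \<ge> 1" by (simp add: n_def DIM_positive Suc_leI)
      then have "r ^ (n - 1) * r powr a = r powr (real n - 1 + a)"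
        using \<open>r > 0\<close> by (simp add: powr_realpow[symmetric] powr_add[symmetric] of_nat_diff)
      also have "real n - 1 + a = a + n - 1" by simp
      finally have "r ^ (n - 1) * r powr a = r powr (a + n - 1)" .
      then show ?thesis
        using True \<open>r > 0\<close> by (simp add: ennreal_mult'[symmetric] mult.assoc)
    qed simp
  qed
  finally show ?thesis .
qed

lemma nn_integral_indicator_has_integral:
  fixes f :: "real \<Rightarrow> real"
  assumes "(f has_integral I) S" and [measurable]: "S \<in> sets borel" "f \<in> borel_measurable borel"
    and nonneg: "\<And>r. r \<in> S \<Longrightarrow> 0 \<le> f r"
  shows "(\<integral>\<^sup>+ r. ennreal (f r * indicator S r) \<partial>lborel) = ennreal I"
proof (rule nn_integral_has_integral_lborel)
  from has_integral_restrict_UNIV[THEN iffD2, OF assms(1)]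
  show "((\<lambda>r. f r * indicator S r) has_integral I) UNIV"
    by (rule has_integral_eq[rotated]) (simp add: indicator_def)
qed (auto simp: indicator_def nonneg)

lemma nn_integral_ball_norm_powr:
  defines "n \<equiv> DIM('a::euclidean_space)"
  assumes a: "a > - n" and \<rho>: "\<rho> > 0"
  shows "(\<integral>\<^sup>+ x. indicator (ball (0::'a) \<rho>) x * ennreal (norm x powr a) \<partial>lborel)
           = ennreal (n * unit_ball_vol n * \<rho> powr (a + n) / (a + n))"
proof -
  have "(\<integral>\<^sup>+ x. indicator (ball (0::'a) \<rho>) x * ennreal (norm x powr a) \<partial>lborel)
      = (\<integral>\<^sup>+ x. indicator {0<..<\<rho>} (norm (x::'a)) * ennreal (norm x powr a) \<partial>lborel)"
    by (rule nn_integral_cong) (simp add: indicator_def)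
  also have "\<dots> = (\<integral>\<^sup>+ r. ennreal (n * unit_ball_vol n * r powr (a + n - 1) * indicator {0<..<\<rho>} r) \<partial>lborel)"
    unfolding n_def by (rule nn_integral_radial_powr) auto
  also have "\<dots> = ennreal (n * unit_ball_vol n * (\<rho> powr (a + n) / (a + n)))"
  proof (rule nn_integral_indicator_has_integral)
    have "((\<lambda>r. r powr (a + n - 1)) has_integral \<rho> powr (a + n) / (a + n)) {0..\<rho>}"
      using has_integral_powr_from_0[of "a + n - 1" \<rho>] a \<rho> by simp
    then show "((\<lambda>r. n * unit_ball_vol n * r powr (a + n - 1)) has_integral
        n * unit_ball_vol n * (\<rho> powr (a + n) / (a + n))) {0<..<\<rho>}"
      by (intro has_integral_mult_right) (simp add: has_integral_Icc_iff_Ioo)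
  qed auto
  finally show ?thesis by simp
qed

lemma nn_integral_outside_ball_norm_powr:
  defines "n \<equiv> DIM('a::euclidean_space)"
  assumes a: "a < - n" and c: "c > 0"
  shows "(\<integral>\<^sup>+ x. indicator (- ball (0::'a) c) x * ennreal (norm x powr a) \<partial>lborel)
           = ennreal (n * unit_ball_vol n * c powr (a + n) / (- a - n))"
proof -
  have "(\<integral>\<^sup>+ x. indicator (- ball (0::'a) c) x * ennreal (norm x powr a) \<partial>lborel)
      = (\<integral>\<^sup>+ x. indicator {c..} (norm (x::'a)) * ennreal (norm x powr a) \<partial>lborel)"
    by (rule nn_integral_cong) (simp add: indicator_def)
  also have "\<dots> = (\<integral>\<^sup>+ r. ennreal (n * unit_ball_vol n * r powr (a + n - 1) * indicator {c..} r) \<partial>lborel)"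
    unfolding n_def using c by (intro nn_integral_radial_powr) auto
  also have "\<dots> = ennreal (n * unit_ball_vol n * (c powr (a + n) / (- a - n)))"
  proof (rule nn_integral_indicator_has_integral)
    have "((\<lambda>r. r powr (a + n - 1)) has_integral c powr (a + n) / (- a - n)) {c..}"
      using has_integral_powr_to_inf[of "a + n - 1" c] a c by (simp add: minus_divide_right)
    then show "((\<lambda>r. n * unit_ball_vol n * r powr (a + n - 1)) has_integral
        n * unit_ball_vol n * (c powr (a + n) / (- a - n))) {c..}"
      by (rule has_integral_mult_right)
  qed (use c in auto)
  finally show ?thesis by simp
qed

lemma unit_ball_vol_2: "unit_ball_vol 2 = pi"
  using unit_ball_vol_even[of 1] by simp

section \<open>Rotation by a right angle\<close>

definition rot90 :: "real^2 \<Rightarrow> real^2" where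
  "rot90 h = vector [- (h$2), h$1]"

lemma rot90_nth [simp]: "rot90 h $ 1 = - (h$2)" "rot90 h $ 2 = h$1"
  by (simp_all add: rot90_def)

lemma linear_rot90: "linear rot90"
  by (rule linearI) (auto simp: vec_eq_iff forall_2)

lemma rot90_measurable [measurable]: "rot90 \<in> borel_measurable borel"
  using linear_rot90 by (intro borel_measurable_continuous_onI linear_continuous_on) (simp add: linear_conv_bounded_linear)

lemma norm_rot90 [simp]: "norm (rot90 h) = norm h"
  by (simp add: norm_eq_sqrt_inner inner_vec_def sum_2 algebra_simps)

lemma Basis_vec2: "(Basis :: (real^2) set) = {axis 1 1, axis 2 1}"
  by (auto simp: Basis_vec_def UNIV_2)

lemma distr_lborel_rot90: "distr lborel borel rot90 = lborel"
proof (rule lborel_eqI[symmetric])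
  fix l u :: "real^2"
  assume le: "\<And>b. b \<in> Basis \<Longrightarrow> l \<bullet> b \<le> u \<bullet> b"
  have "l$1 \<le> u$1" "l$2 \<le> u$2"
    using le[of "axis 1 1"] le[of "axis 2 1"] by (auto simp: Basis_vec2 inner_axis)
  define l' :: "real^2" where "l' = vector [l$2, - (u$1)]"
  define u' :: "real^2" where "u' = vector [u$2, - (l$1)]"
  have "rot90 -` box l u = box l' u'"
    by (auto simp: mem_box_cart forall_2 l'_def u'_def)
  then have "emeasure (distr lborel borel rot90) (box l u) = emeasure lborel (box l' u')"
    by (simp add: emeasure_distr)
  also have "\<dots> = (\<Prod>b\<in>Basis. (u - l) \<bullet> b)"
    using \<open>l$1 \<le> u$1\<close> \<open>l$2 \<le> u$2\<close>
    by (simp add: emeasure_lborel_box_eq Basis_vec2 axis_eq_axis inner_axis l'_def u'_def)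
  finally show "emeasure (distr lborel borel rot90) (box l u) = (\<Prod>b\<in>Basis. (u - l) \<bullet> b)" .
qed simp

lemma nn_integral_rot90:
  assumes [measurable]: "f \<in> borel_measurable borel"
  shows "(\<integral>\<^sup>+ h. f (rot90 h) \<partial>lborel) = (\<integral>\<^sup>+ h. f h \<partial>lborel)"
  using nn_integral_distr[of rot90 lborel borel f] by (simp add: distr_lborel_rot90)

lemma inner_rot90_sq_add:
  assumes "norm e = 1"
  shows "(rot90 h \<bullet> e)\<^sup>2 + (h \<bullet> e)\<^sup>2 = (norm h)\<^sup>2"
proof -
  have norm2: "(norm x)\<^sup>2 = (x$1)\<^sup>2 + (x$2)\<^sup>2" for x :: "real^2"
    by (simp only: power2_norm_eq_inner) (simp add: inner_vec_def sum_2 power2_eq_square)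
  have "(rot90 h \<bullet> e)\<^sup>2 + (h \<bullet> e)\<^sup>2 = ((h$1)\<^sup>2 + (h$2)\<^sup>2) * ((e$1)\<^sup>2 + (e$2)\<^sup>2)"
    unfolding inner_vec_def sum_2 rot90_nth inner_real_def by algebra
  also have "\<dots> = (norm h)\<^sup>2 * (norm e)\<^sup>2"
    by (simp only: norm2)
  finally show ?thesis using assms by simp
qed

text \<open>Against a rotation-invariant weight, \<open>(h \<bullet> e)\<^sup>2\<close> and \<open>(rot90 h \<bullet> e)\<^sup>2\<close> have the same
  integral, and they add up to \<open>(norm h)\<^sup>2\<close>.\<close>

lemma nn_integral_tangential_half:
  fixes g :: "real^2 \<Rightarrow> real" and e :: "real^2"
  assumes [measurable]: "g \<in> borel_measurable borel"
    and g_nonneg: "\<And>h. g h \<ge> 0" and g_rot90: "\<And>h. g (rot90 h) = g h" and e: "norm e = 1"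
  shows "2 * (\<integral>\<^sup>+ h. ennreal (g h * ((norm h)\<^sup>2 - (h \<bullet> e)\<^sup>2)) \<partial>lborel)
           = (\<integral>\<^sup>+ h. ennreal (g h * (norm h)\<^sup>2) \<partial>lborel)"
proof -
  have tangential: "(norm h)\<^sup>2 - (h \<bullet> e)\<^sup>2 = (rot90 h \<bullet> e)\<^sup>2" for h
    using inner_rot90_sq_add[OF e, of h] by simp
  have "(\<integral>\<^sup>+ h. ennreal (g h * (rot90 h \<bullet> e)\<^sup>2) \<partial>lborel) = (\<integral>\<^sup>+ h. ennreal (g h * (h \<bullet> e)\<^sup>2) \<partial>lborel)"
    using nn_integral_rot90[of "\<lambda>h. ennreal (g h * (h \<bullet> e)\<^sup>2)"] by (simp add: g_rot90)
  then have "2 * (\<integral>\<^sup>+ h. ennreal (g h * ((norm h)\<^sup>2 - (h \<bullet> e)\<^sup>2)) \<partial>lborel)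
      = (\<integral>\<^sup>+ h. ennreal (g h * (rot90 h \<bullet> e)\<^sup>2) \<partial>lborel) + (\<integral>\<^sup>+ h. ennreal (g h * (h \<bullet> e)\<^sup>2) \<partial>lborel)"
    by (simp add: tangential mult_2)
  also have "\<dots> = (\<integral>\<^sup>+ h. ennreal (g h * (rot90 h \<bullet> e)\<^sup>2) + ennreal (g h * (h \<bullet> e)\<^sup>2) \<partial>lborel)"
    by (rule nn_integral_add[symmetric]) auto
  also have "\<dots> = (\<integral>\<^sup>+ h. ennreal (g h * (norm h)\<^sup>2) \<partial>lborel)"
    by (rule nn_integral_cong)
      (simp add: g_nonneg ennreal_plus[symmetric] distrib_left[symmetric] inner_rot90_sq_add[OF e] del: ennreal_plus)
  finally show ?thesis .
qed

lemma nn_integral_ball_tangential_powr: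
  fixes e :: "real^2"
  assumes a: "a > -2" and \<rho>: "\<rho> > 0" and e: "norm e = 1"
  shows "(\<integral>\<^sup>+ h. indicator (ball 0 \<rho>) h * ennreal (((norm h)\<^sup>2 - (h \<bullet> e)\<^sup>2) * norm h powr (a - 2)) \<partial>lborel)
           = ennreal (pi * \<rho> powr (a + 2) / (a + 2))"
proof -
  define g where "g h = indicator (ball 0 \<rho>) h * norm h powr (a - 2)" for h :: "real^2"
  have "2 * (\<integral>\<^sup>+ h. indicator (ball 0 \<rho>) h * ennreal (((norm h)\<^sup>2 - (h \<bullet> e)\<^sup>2) * norm h powr (a - 2)) \<partial>lborel)
      = 2 * (\<integral>\<^sup>+ h. ennreal (g h * ((norm h)\<^sup>2 - (h \<bullet> e)\<^sup>2)) \<partial>lborel)"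
    by (intro arg_cong[where f="(*) 2"] nn_integral_cong) (simp add: g_def mult.commute split: split_indicator)
  also have "\<dots> = (\<integral>\<^sup>+ h. ennreal (g h * (norm h)\<^sup>2) \<partial>lborel)"
    by (rule nn_integral_tangential_half[OF _ _ _ e]) (auto simp: g_def indicator_def)
  also have "\<dots> = (\<integral>\<^sup>+ h. indicator (ball (0::real^2) \<rho>) h * ennreal (norm h powr a) \<partial>lborel)"
  proof (rule nn_integral_cong)
    fix h :: "real^2"
    have "norm h powr (a - 2) * (norm h)\<^sup>2 = norm h powr a"
      using powr_add[of "norm h" "a - 2" 2] by (cases "h = 0") (simp_all add: powr_numeral)
    then show "ennreal (g h * (norm h)\<^sup>2) = indicator (ball 0 \<rho>) h * ennreal (norm h powr a)"
      by (simp add: g_def indicator_def)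
  qed
  also have "\<dots> = ennreal (2 * pi * \<rho> powr (a + 2) / (a + 2))"
    using nn_integral_ball_norm_powr[where 'a="real^2" and a=a, OF _ \<rho>] a by (simp add: unit_ball_vol_2)
  also have "\<dots> = 2 * ennreal (pi * \<rho> powr (a + 2) / (a + 2))"
    using ennreal_mult'[of 2 "pi * \<rho> powr (a + 2) / (a + 2)"] by (simp add: mult.assoc)
  finally show ?thesis
    by (simp add: ennreal_mult_cancel_left)
qed

section \<open>The inner integral of the Gagliardo seminorm\<close>

definition gagliardo_density :: "real \<Rightarrow> (real^2) set \<Rightarrow> (real^2 \<Rightarrow> real^2) \<Rightarrow> real^2 \<Rightarrow> ennreal" where
  "gagliardo_density \<alpha> \<Omega> u x =
     (\<integral>\<^sup>+ y. indicator \<Omega> y * ennreal ((norm (u x - u y))\<^sup>2 / norm (x - y) powr (2 + 2 * \<alpha>)) \<partial>lborel)"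

lemma gagliardo_sq_iterated:
  assumes [measurable]: "\<Omega> \<in> sets borel" "u \<in> borel_measurable borel"
  shows "gagliardo_sq \<alpha> \<Omega> u = (\<integral>\<^sup>+ x. indicator \<Omega> x * gagliardo_density \<alpha> \<Omega> u x \<partial>lborel)"
proof -
  have "gagliardo_sq \<alpha> \<Omega> u = (\<integral>\<^sup>+ x. \<integral>\<^sup>+ y. indicator (\<Omega> \<times> \<Omega>) (x, y) *
        ennreal ((norm (u x - u y))\<^sup>2 / norm (x - y) powr (2 + 2 * \<alpha>)) \<partial>lborel \<partial>lborel)"
    unfolding gagliardo_sq_def by (subst lborel.nn_integral_fst[symmetric]) simp_all
  also have "\<dots> = (\<integral>\<^sup>+ x. indicator \<Omega> x * gagliardo_density \<alpha> \<Omega> u x \<partial>lborel)"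
    unfolding gagliardo_density_def
    by (intro nn_integral_cong, subst nn_integral_cmult[symmetric])
      (auto simp: indicator_def intro!: nn_integral_cong)
  finally show ?thesis .
qed

lemma gagliardo_density_translate:
  assumes [measurable]: "\<Omega> \<in> sets borel" "u \<in> borel_measurable borel"
  shows "gagliardo_density \<alpha> \<Omega> u x
           = (\<integral>\<^sup>+ h. indicator \<Omega> (x + h) * ennreal ((norm (u x - u (x + h)))\<^sup>2 / norm h powr (2 + 2 * \<alpha>)) \<partial>lborel)"
proof -
  have "(\<integral>\<^sup>+ h. indicator \<Omega> (x + h) * ennreal ((norm (u x - u (x + h)))\<^sup>2 / norm (x - (x + h)) powr (2 + 2 * \<alpha>)) \<partial>lborel)
      = gagliardo_density \<alpha> \<Omega> u x"
    unfolding gagliardo_density_def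
    using nn_integral_distr[of "(+) x" lborel borel
        "\<lambda>y. indicator \<Omega> y * ennreal ((norm (u x - u y))\<^sup>2 / norm (x - y) powr (2 + 2 * \<alpha>))"]
    by (simp add: lborel_distr_plus)
  then show ?thesis by simp
qed

lemma norm_u_star [simp]: "p \<noteq> 0 \<Longrightarrow> norm (u_star p) = 1"
  by (simp add: u_star_def)

lemma u_star_measurable [measurable]: "u_star \<in> borel_measurable borel"
  unfolding u_star_def by measurable

lemma norm_u_star_diff_sq_le: "(norm (u_star x - u_star y))\<^sup>2 \<le> 4"
proof -
  have "norm (u_star p) \<le> 1" for p
    by (cases "p = 0") (simp_all add: u_star_def)
  then have "norm (u_star x - u_star y) \<le> 2"
    by (smt (verit) norm_triangle_ineq4)
  then show ?thesis
    using power_mono[of "norm (u_star x - u_star y)" 2 2] by simp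
qed

text \<open>An exact form of the expansion \<open>|u\<^sub>\<star>(x) - u\<^sub>\<star>(x + h)|\<^sup>2 \<approx> ((norm h)\<^sup>2 - (h \<bullet> u\<^sub>\<star> x)\<^sup>2) / |x|\<^sup>2\<close>:
  the second factor on the left is \<open>2 |x|\<^sup>2 + O(|x| |h|)\<close>.\<close>

lemma norm_u_star_diff_sq_identity:
  fixes x h :: "real^2"
  assumes x: "x \<noteq> 0" and xh: "x + h \<noteq> 0"
  shows "(norm (u_star x - u_star (x + h)))\<^sup>2 * (norm (x + h) * (norm (x + h) + norm x + h \<bullet> u_star x))
         = 2 * ((norm h)\<^sup>2 - (h \<bullet> u_star x)\<^sup>2)"
proof -
  define y where "y = x + h"
  define X Y p where "X = norm x" and "Y = norm y" and "p = x \<bullet> y"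
  have "X > 0" "Y > 0" using x xh by (simp_all add: X_def Y_def y_def)
  have xx: "x \<bullet> x = X\<^sup>2" and yy: "y \<bullet> y = Y\<^sup>2"
    by (simp_all add: X_def Y_def power2_norm_eq_inner)
  have h: "h = y - x" by (simp add: y_def)
  have "(norm (u_star x - u_star y))\<^sup>2 = (x \<bullet> x) / X\<^sup>2 - 2 * p / (X * Y) + (y \<bullet> y) / Y\<^sup>2"
    unfolding power2_norm_eq_inner u_star_def X_def[symmetric] Y_def[symmetric] p_def
    by (simp add: inner_diff_left inner_diff_right inner_commute power2_eq_square algebra_simps)
  then have diff: "(norm (u_star x - u_star y))\<^sup>2 = 2 - 2 * p / (X * Y)"
    using \<open>X > 0\<close> \<open>Y > 0\<close> xx yy by simp
  have tang: "h \<bullet> u_star x = (p - X\<^sup>2) / X"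
    using xx by (simp add: h u_star_def X_def[symmetric] p_def inner_diff_left inner_diff_right inner_commute)
  have hh: "(norm h)\<^sup>2 = Y\<^sup>2 - 2 * p + X\<^sup>2"
    using xx yy by (simp add: h power2_norm_eq_inner inner_diff_left inner_diff_right p_def inner_commute)
  show ?thesis
    unfolding y_def[symmetric] X_def[symmetric] Y_def[symmetric] diff tang hh
    using \<open>X > 0\<close> \<open>Y > 0\<close> by (simp add: field_simps) algebra
qed

lemma norm_u_star_diff_sq_bounds:
  fixes x h :: "real^2"
  assumes x: "x \<noteq> 0" and \<epsilon>: "0 < \<epsilon>" "\<epsilon> < 1" and h: "norm h \<le> \<epsilon> * norm x"
  shows "(norm h)\<^sup>2 - (h \<bullet> u_star x)\<^sup>2 \<le> (norm (u_star x - u_star (x + h)))\<^sup>2 * ((1 + \<epsilon>)\<^sup>2 * (norm x)\<^sup>2)"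
    and "(norm (u_star x - u_star (x + h)))\<^sup>2 * ((1 - \<epsilon>)\<^sup>2 * (norm x)\<^sup>2) \<le> (norm h)\<^sup>2 - (h \<bullet> u_star x)\<^sup>2"
proof -
  define X Y a N where "X = norm x" and "Y = norm (x + h)" and "a = h \<bullet> u_star x"
    and "N = (norm (u_star x - u_star (x + h)))\<^sup>2"
  have "X > 0" using x by (simp add: X_def)
  have Y_lo: "(1 - \<epsilon>) * X \<le> Y" and Y_hi: "Y \<le> (1 + \<epsilon>) * X"
    using norm_triangle_ineq[of "x + h" "- h"] norm_triangle_ineq[of x h] h
    by (simp_all add: X_def Y_def algebra_simps)
  have "\<bar>a\<bar> \<le> \<epsilon> * X"
    using Cauchy_Schwarz_ineq2[of h "u_star x"] x h by (simp add: a_def X_def)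
  then have S_lo: "2 * (1 - \<epsilon>) * X \<le> Y + X + a" and S_hi: "Y + X + a \<le> 2 * (1 + \<epsilon>) * X"
    using Y_lo Y_hi by (simp_all add: algebra_simps abs_le_iff)
  have "(1 - \<epsilon>) * X > 0" using \<open>X > 0\<close> \<epsilon> by simp
  then have "x + h \<noteq> 0" using Y_lo by (auto simp: Y_def)
  have D_lo: "2 * ((1 - \<epsilon>)\<^sup>2 * X\<^sup>2) \<le> Y * (Y + X + a)"
    using mult_mono[OF Y_lo S_lo] \<open>(1 - \<epsilon>) * X > 0\<close> by (simp add: Y_def, simp add: power2_eq_square algebra_simps)
  have D_hi: "Y * (Y + X + a) \<le> 2 * ((1 + \<epsilon>)\<^sup>2 * X\<^sup>2)"
  proof -
    have "0 \<le> Y + X + a" using S_lo \<open>(1 - \<epsilon>) * X > 0\<close> by linarith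
    then show ?thesis
      using mult_mono[OF Y_hi S_hi] \<open>X > 0\<close> \<epsilon> by (simp add: power2_eq_square algebra_simps)
  qed
  have "N \<ge> 0" by (simp add: N_def)
  have identity: "N * (Y * (Y + X + a)) = 2 * ((norm h)\<^sup>2 - a\<^sup>2)"
    unfolding N_def X_def Y_def a_def by (rule norm_u_star_diff_sq_identity[OF x \<open>x + h \<noteq> 0\<close>])
  show "(norm h)\<^sup>2 - (h \<bullet> u_star x)\<^sup>2 \<le> (norm (u_star x - u_star (x + h)))\<^sup>2 * ((1 + \<epsilon>)\<^sup>2 * (norm x)\<^sup>2)"
    using mult_left_mono[OF D_hi \<open>N \<ge> 0\<close>] identity by (simp add: N_def X_def a_def)
  show "(norm (u_star x - u_star (x + h)))\<^sup>2 * ((1 - \<epsilon>)\<^sup>2 * (norm x)\<^sup>2) \<le> (norm h)\<^sup>2 - (h \<bullet> u_star x)\<^sup>2"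
    using mult_left_mono[OF D_lo \<open>N \<ge> 0\<close>] identity by (simp add: N_def X_def a_def)
qed

lemma u_star_kernel_upper:
  fixes x h :: "real^2"
  assumes x: "x \<noteq> 0" and \<epsilon>: "0 < \<epsilon>" "\<epsilon> < 1"
  shows "ennreal ((norm (u_star x - u_star (x + h)))\<^sup>2 / norm h powr (3 + s))
     \<le> ennreal (1 / ((1 - \<epsilon>)\<^sup>2 * (norm x)\<^sup>2)) *
          (indicator (ball 0 (\<epsilon> * norm x)) h * ennreal (((norm h)\<^sup>2 - (h \<bullet> u_star x)\<^sup>2) * norm h powr (- 3 - s)))
        + 4 * (indicator (- ball 0 (\<epsilon> * norm x)) h * ennreal (norm h powr (- 3 - s)))"
proof -
  define N P where "N = (norm (u_star x - u_star (x + h)))\<^sup>2" and "P = norm h powr (- 3 - s)"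
  have "P \<ge> 0" by (simp add: P_def)
  have kernel: "(norm (u_star x - u_star (x + h)))\<^sup>2 / norm h powr (3 + s) = N * P"
    using powr_minus_divide[of "norm h" "3 + s"] by (simp add: N_def P_def)
  show ?thesis
  proof (cases "norm h < \<epsilon> * norm x")
    case True
    have "N * ((1 - \<epsilon>)\<^sup>2 * (norm x)\<^sup>2) \<le> (norm h)\<^sup>2 - (h \<bullet> u_star x)\<^sup>2"
      using norm_u_star_diff_sq_bounds(2)[OF x \<epsilon>, of h] True by (simp add: N_def)
    then have "N \<le> 1 / ((1 - \<epsilon>)\<^sup>2 * (norm x)\<^sup>2) * ((norm h)\<^sup>2 - (h \<bullet> u_star x)\<^sup>2)"
      using x \<epsilon> by (simp add: field_simps)
    then have "N * P \<le> 1 / ((1 - \<epsilon>)\<^sup>2 * (norm x)\<^sup>2) * (((norm h)\<^sup>2 - (h \<bullet> u_star x)\<^sup>2) * P)"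
      using \<open>P \<ge> 0\<close> by (metis mult.assoc mult_right_mono)
    then have "ennreal (N * P) \<le> ennreal (1 / ((1 - \<epsilon>)\<^sup>2 * (norm x)\<^sup>2)) * ennreal (((norm h)\<^sup>2 - (h \<bullet> u_star x)\<^sup>2) * P)"
      by (simp add: ennreal_leI flip: ennreal_mult')
    then show ?thesis
      using True by (simp add: kernel P_def[symmetric] add_increasing2)
  next
    case False
    have "N \<le> 4" unfolding N_def by (rule norm_u_star_diff_sq_le)
    then have "ennreal (N * P) \<le> ennreal (4 * P)"
      using \<open>P \<ge> 0\<close> by (intro ennreal_leI mult_right_mono)
    also have "\<dots> = 4 * ennreal P"
      by (simp add: ennreal_mult')
    finally show ?thesis
      using False by (simp add: kernel P_def[symmetric] add_increasing)
  qed
qed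

lemma u_star_kernel_lower:
  fixes x h :: "real^2"
  assumes x: "x \<noteq> 0" and \<epsilon>: "0 < \<epsilon>" "\<epsilon> < 1"
  shows "ennreal (1 / ((1 + \<epsilon>)\<^sup>2 * (norm x)\<^sup>2)) *
          (indicator (ball 0 (\<epsilon> * norm x)) h * ennreal (((norm h)\<^sup>2 - (h \<bullet> u_star x)\<^sup>2) * norm h powr (- 3 - s)))
     \<le> ennreal ((norm (u_star x - u_star (x + h)))\<^sup>2 / norm h powr (3 + s))"
proof (cases "norm h < \<epsilon> * norm x")
  case True
  define N P where "N = (norm (u_star x - u_star (x + h)))\<^sup>2" and "P = norm h powr (- 3 - s)"
  have "P \<ge> 0" by (simp add: P_def)
  have kernel: "(norm (u_star x - u_star (x + h)))\<^sup>2 / norm h powr (3 + s) = N * P"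
    using powr_minus_divide[of "norm h" "3 + s"] by (simp add: N_def P_def)
  have "(norm h)\<^sup>2 - (h \<bullet> u_star x)\<^sup>2 \<le> N * ((1 + \<epsilon>)\<^sup>2 * (norm x)\<^sup>2)"
    using norm_u_star_diff_sq_bounds(1)[OF x \<epsilon>, of h] True by (simp add: N_def)
  then have "1 / ((1 + \<epsilon>)\<^sup>2 * (norm x)\<^sup>2) * ((norm h)\<^sup>2 - (h \<bullet> u_star x)\<^sup>2) \<le> N"
    using x \<epsilon> by (simp add: field_simps)
  then have "1 / ((1 + \<epsilon>)\<^sup>2 * (norm x)\<^sup>2) * (((norm h)\<^sup>2 - (h \<bullet> u_star x)\<^sup>2) * P) \<le> N * P"
    using \<open>P \<ge> 0\<close> by (metis mult.assoc mult_right_mono)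
  then have "ennreal (1 / ((1 + \<epsilon>)\<^sup>2 * (norm x)\<^sup>2)) * ennreal (((norm h)\<^sup>2 - (h \<bullet> u_star x)\<^sup>2) * P) \<le> ennreal (N * P)"
    by (simp add: ennreal_leI flip: ennreal_mult')
  then show ?thesis
    using True by (simp add: kernel P_def[symmetric])
qed simp

lemma powr_scaled_div_sq:
  fixes \<epsilon> r :: real
  assumes "\<epsilon> > 0" "r > 0"
  shows "(\<epsilon> * r) powr (1 - s) / r\<^sup>2 = \<epsilon> powr (1 - s) * r powr (- 1 - s)"
  using assms powr_add[of r "- 1 - s" 2] by (simp add: powr_mult powr_numeral)

lemma gagliardo_density_u_star_upper:
  fixes x :: "real^2"
  assumes s: "- 1 < s" "s < 1" and \<epsilon>: "0 < \<epsilon>" "\<epsilon> < 1" and x: "x \<noteq> 0"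
  shows "gagliardo_density ((1 + s) / 2) (ball 0 1) u_star x
     \<le> ennreal ((pi * \<epsilon> powr (1 - s) / ((1 - \<epsilon>)\<^sup>2 * (1 - s)) + 8 * pi * \<epsilon> powr (- 1 - s) / (1 + s))
                 * norm x powr (- 1 - s))"
proof -
  define r c where "r = \<epsilon> * norm x" and "c = 1 / ((1 - \<epsilon>)\<^sup>2 * (norm x)\<^sup>2)"
  have "r > 0" "c \<ge> 0" using \<epsilon> x by (simp_all add: r_def c_def)
  have "gagliardo_density ((1 + s) / 2) (ball 0 1) u_star x
      = (\<integral>\<^sup>+ h. indicator (ball 0 1) (x + h) * ennreal ((norm (u_star x - u_star (x + h)))\<^sup>2 / norm h powr (3 + s)) \<partial>lborel)"
    unfolding gagliardo_density_translate[OF borel_open[OF open_ball] u_star_measurable]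
    by (simp add: add_divide_distrib)
  also have "\<dots> \<le> (\<integral>\<^sup>+ h. ennreal c * (indicator (ball 0 r) h * ennreal (((norm h)\<^sup>2 - (h \<bullet> u_star x)\<^sup>2) * norm h powr (- 3 - s)))
                    + 4 * (indicator (- ball 0 r) h * ennreal (norm h powr (- 3 - s))) \<partial>lborel)"
    unfolding r_def c_def
    by (intro nn_integral_mono order_trans[OF _ u_star_kernel_upper[OF x \<epsilon>]])
      (simp add: indicator_def)
  also have "\<dots> = ennreal c * (\<integral>\<^sup>+ h. indicator (ball 0 r) h * ennreal (((norm h)\<^sup>2 - (h \<bullet> u_star x)\<^sup>2) * norm h powr (- 3 - s)) \<partial>lborel)
                 + 4 * (\<integral>\<^sup>+ h. indicator (- ball (0::real^2) r) h * ennreal (norm h powr (- 3 - s)) \<partial>lborel)"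
    by (subst nn_integral_add, measurable, subst (1 2) nn_integral_cmult, measurable)
  also have "\<dots> = ennreal c * ennreal (pi * r powr (1 - s) / (1 - s)) + 4 * ennreal (2 * pi * r powr (- 1 - s) / (1 + s))"
    using nn_integral_ball_tangential_powr[of "- 1 - s" r "u_star x"]
      nn_integral_outside_ball_norm_powr[where 'a="real^2" and a="- 3 - s" and c=r]
      s x \<open>r > 0\<close> by (simp add: unit_ball_vol_2)
  also have "\<dots> = ennreal (c * (pi * r powr (1 - s) / (1 - s))) + ennreal (4 * (2 * pi * r powr (- 1 - s) / (1 + s)))"
    using \<open>c \<ge> 0\<close> by (simp only: ennreal_mult' ennreal_numeral zero_le_numeral)
  also have "\<dots> = ennreal (c * (pi * r powr (1 - s) / (1 - s)) + 4 * (2 * pi * r powr (- 1 - s) / (1 + s)))"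
    using s by (intro ennreal_plus[symmetric]) (simp_all add: c_def)
  also have "c * (pi * r powr (1 - s) / (1 - s)) + 4 * (2 * pi * r powr (- 1 - s) / (1 + s))
      = (pi * \<epsilon> powr (1 - s) / ((1 - \<epsilon>)\<^sup>2 * (1 - s)) + 8 * pi * \<epsilon> powr (- 1 - s) / (1 + s)) * norm x powr (- 1 - s)"
    using powr_scaled_div_sq[OF \<epsilon>(1), of "norm x" s] x \<epsilon>
    by (simp add: r_def c_def powr_mult field_simps)
  finally show ?thesis .
qed

lemma gagliardo_density_u_star_lower:
  fixes x :: "real^2"
  assumes s: "s < 1" and \<epsilon>: "0 < \<epsilon>" "\<epsilon> < 1" and x: "x \<noteq> 0" "norm x < 1 / (1 + \<epsilon>)"
  shows "ennreal (pi * \<epsilon> powr (1 - s) / ((1 + \<epsilon>)\<^sup>2 * (1 - s)) * norm x powr (- 1 - s))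
     \<le> gagliardo_density ((1 + s) / 2) (ball 0 1) u_star x"
proof -
  define r c where "r = \<epsilon> * norm x" and "c = 1 / ((1 + \<epsilon>)\<^sup>2 * (norm x)\<^sup>2)"
  have "r > 0" "c \<ge> 0" using \<epsilon> x by (simp_all add: r_def c_def)
  have near_in_ball: "x + h \<in> ball 0 1" if "h \<in> ball 0 r" for h
  proof -
    have "norm (x + h) < (1 + \<epsilon>) * norm x"
      using norm_triangle_ineq[of x h] that by (simp add: r_def algebra_simps)
    also have "\<dots> < 1" using x \<epsilon> by (simp add: field_simps)
    finally show ?thesis by simp
  qed
  have "ennreal (pi * \<epsilon> powr (1 - s) / ((1 + \<epsilon>)\<^sup>2 * (1 - s)) * norm x powr (- 1 - s))
      = ennreal c * ennreal (pi * r powr (1 - s) / (1 - s))"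
    using powr_scaled_div_sq[OF \<epsilon>(1), of "norm x" s] x \<epsilon> \<open>c \<ge> 0\<close>
    by (simp add: r_def c_def powr_mult field_simps flip: ennreal_mult')
  also have "\<dots> = ennreal c * (\<integral>\<^sup>+ h. indicator (ball 0 r) h * ennreal (((norm h)\<^sup>2 - (h \<bullet> u_star x)\<^sup>2) * norm h powr (- 3 - s)) \<partial>lborel)"
    using nn_integral_ball_tangential_powr[of "- 1 - s" r "u_star x"] s x \<open>r > 0\<close> by simp
  also have "\<dots> = (\<integral>\<^sup>+ h. ennreal c * (indicator (ball 0 r) h * ennreal (((norm h)\<^sup>2 - (h \<bullet> u_star x)\<^sup>2) * norm h powr (- 3 - s))) \<partial>lborel)"
    by (rule nn_integral_cmult[symmetric]) measurable
  also have "\<dots> \<le> (\<integral>\<^sup>+ h. indicator (ball 0 1) (x + h) * ennreal ((norm (u_star x - u_star (x + h)))\<^sup>2 / norm h powr (3 + s)) \<partial>lborel)"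
  proof (rule nn_integral_mono)
    fix h :: "real^2"
    show "ennreal c * (indicator (ball 0 r) h * ennreal (((norm h)\<^sup>2 - (h \<bullet> u_star x)\<^sup>2) * norm h powr (- 3 - s)))
        \<le> indicator (ball 0 1) (x + h) * ennreal ((norm (u_star x - u_star (x + h)))\<^sup>2 / norm h powr (3 + s))"
      using u_star_kernel_lower[OF x(1) \<epsilon>, of h s] near_in_ball[of h]
      by (cases "h \<in> ball 0 r") (simp_all add: r_def c_def)
  qed
  also have "\<dots> = gagliardo_density ((1 + s) / 2) (ball 0 1) u_star x"
    unfolding gagliardo_density_translate[OF borel_open[OF open_ball] u_star_measurable]
    by (simp add: add_divide_distrib)
  finally show ?thesis .
qed

lemma gagliardo_sq_u_star_le:
  fixes s \<epsilon> :: real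
  defines "C \<equiv> pi * \<epsilon> powr (1 - s) / ((1 - \<epsilon>)\<^sup>2 * (1 - s)) + 8 * pi * \<epsilon> powr (- 1 - s) / (1 + s)"
  assumes s: "- 1 < s" "s < 1" and \<epsilon>: "0 < \<epsilon>" "\<epsilon> < 1"
  shows "gagliardo_sq ((1 + s) / 2) (ball 0 1) u_star \<le> ennreal (C * (2 * pi / (1 - s)))"
proof -
  have "C \<ge> 0" using s \<epsilon> by (simp add: C_def)
  have "gagliardo_sq ((1 + s) / 2) (ball 0 1) u_star
      = (\<integral>\<^sup>+ x. indicator (ball 0 1) x * gagliardo_density ((1 + s) / 2) (ball 0 1) u_star x \<partial>lborel)"
    by (simp add: gagliardo_sq_iterated)
  also have "\<dots> \<le> (\<integral>\<^sup>+ x. ennreal C * (indicator (ball 0 1) x * ennreal (norm (x::real^2) powr (- 1 - s))) \<partial>lborel)"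
  proof (rule nn_integral_mono_AE)
    show "AE x in lborel. indicator (ball 0 1) x * gagliardo_density ((1 + s) / 2) (ball 0 1) u_star x
        \<le> ennreal C * (indicator (ball 0 1) x * ennreal (norm (x::real^2) powr (- 1 - s)))"
      using AE_lborel_singleton[of 0]
    proof eventually_elim
      case (elim x)
      then show ?case
        using gagliardo_density_u_star_upper[OF s \<epsilon> elim] \<open>C \<ge> 0\<close>
        by (simp add: C_def indicator_def ennreal_mult'[symmetric] mult.assoc)
    qed
  qed
  also have "\<dots> = ennreal C * ennreal (2 * pi / (1 - s))"
    using nn_integral_ball_norm_powr[where 'a="real^2" and a="- 1 - s" and \<rho>=1] s
    by (subst nn_integral_cmult) (simp_all add: unit_ball_vol_2)
  also have "\<dots> = ennreal (C * (2 * pi / (1 - s)))"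
    using \<open>C \<ge> 0\<close> by (simp only: ennreal_mult')
  finally show ?thesis .
qed

lemma gagliardo_sq_u_star_ge:
  fixes s \<epsilon> :: real
  defines "C \<equiv> pi * \<epsilon> powr (1 - s) / ((1 + \<epsilon>)\<^sup>2 * (1 - s))" and "R \<equiv> 1 / (1 + \<epsilon>)"
  assumes s: "s < 1" and \<epsilon>: "0 < \<epsilon>" "\<epsilon> < 1"
  shows "ennreal (C * (2 * pi * R powr (1 - s) / (1 - s))) \<le> gagliardo_sq ((1 + s) / 2) (ball 0 1) u_star"
proof -
  have "C \<ge> 0" "0 < R" "R < 1" using s \<epsilon> by (simp_all add: C_def R_def)
  have "ennreal (C * (2 * pi * R powr (1 - s) / (1 - s))) = ennreal C * ennreal (2 * pi * R powr (1 - s) / (1 - s))"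
    using \<open>C \<ge> 0\<close> by (rule ennreal_mult')
  also have "\<dots> = ennreal C * (\<integral>\<^sup>+ x. indicator (ball 0 R) x * ennreal (norm (x::real^2) powr (- 1 - s)) \<partial>lborel)"
    using nn_integral_ball_norm_powr[where 'a="real^2" and a="- 1 - s" and \<rho>=R] s \<open>0 < R\<close>
    by (simp add: unit_ball_vol_2)
  also have "\<dots> = (\<integral>\<^sup>+ x. ennreal C * (indicator (ball 0 R) x * ennreal (norm (x::real^2) powr (- 1 - s))) \<partial>lborel)"
    by (rule nn_integral_cmult[symmetric]) measurable
  also have "\<dots> \<le> (\<integral>\<^sup>+ x. indicator (ball 0 1) x * gagliardo_density ((1 + s) / 2) (ball 0 1) u_star x \<partial>lborel)"
  proof (rule nn_integral_mono_AE)
    show "AE x in lborel. ennreal C * (indicator (ball 0 R) x * ennreal (norm (x::real^2) powr (- 1 - s)))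
        \<le> indicator (ball 0 1) x * gagliardo_density ((1 + s) / 2) (ball 0 1) u_star x"
      using AE_lborel_singleton[of 0]
    proof eventually_elim
      case (elim x)
      show ?case
      proof (cases "x \<in> ball 0 R")
        case True
        then show ?thesis
          using gagliardo_density_u_star_lower[OF s \<epsilon> elim] \<open>C \<ge> 0\<close> \<open>R < 1\<close>
          by (simp add: C_def R_def indicator_def ennreal_mult'[symmetric] mult.assoc)
      qed simp
    qed
  qed
  also have "\<dots> = gagliardo_sq ((1 + s) / 2) (ball 0 1) u_star"
    by (simp add: gagliardo_sq_iterated)
  finally show ?thesis .
qed

definition u_star_energy_upper_bound :: "real \<Rightarrow> real \<Rightarrow> real" where
  "u_star_energy_upper_bound \<epsilon> s =
     2 * pi * (pi * \<epsilon> powr (1 - s) / (1 - \<epsilon>)\<^sup>2 + (1 - s) * (8 * pi * \<epsilon> powr (- 1 - s) / (1 + s)))"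

definition u_star_energy_lower_bound :: "real \<Rightarrow> real \<Rightarrow> real" where
  "u_star_energy_lower_bound \<epsilon> s = 2 * pi * (pi * \<epsilon> powr (1 - s) / (1 + \<epsilon>)\<^sup>2) * (1 / (1 + \<epsilon>)) powr (1 - s)"

lemma u_star_energy_le_upper_bound:
  assumes s: "- 1 < s" "s < 1" and \<epsilon>: "0 < \<epsilon>" "\<epsilon> < 1"
  shows "ennreal ((1 - s)\<^sup>2) * gagliardo_sq ((1 + s) / 2) (ball 0 1) u_star \<le> ennreal (u_star_energy_upper_bound \<epsilon> s)"
proof -
  have rescale: "t\<^sup>2 * ((P / (d * t) + Q) * (2 * pi / t)) = 2 * pi * (P / d + t * Q)" if "t \<noteq> 0" "d \<noteq> 0"
    for t d P Q :: real
    using that by (simp add: field_simps power2_eq_square)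
  have "ennreal ((1 - s)\<^sup>2) * gagliardo_sq ((1 + s) / 2) (ball 0 1) u_star
      \<le> ennreal ((1 - s)\<^sup>2) * ennreal ((pi * \<epsilon> powr (1 - s) / ((1 - \<epsilon>)\<^sup>2 * (1 - s))
            + 8 * pi * \<epsilon> powr (- 1 - s) / (1 + s)) * (2 * pi / (1 - s)))"
    by (rule mult_left_mono[OF gagliardo_sq_u_star_le[OF s \<epsilon>]]) simp
  also have "\<dots> = ennreal (u_star_energy_upper_bound \<epsilon> s)"
    using s \<epsilon> rescale[of "1 - s" "(1 - \<epsilon>)\<^sup>2"]
    by (simp add: u_star_energy_upper_bound_def flip: ennreal_mult')
  finally show ?thesis .
qed

lemma u_star_energy_ge_lower_bound:
  assumes s: "s < 1" and \<epsilon>: "0 < \<epsilon>" "\<epsilon> < 1"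
  shows "ennreal (u_star_energy_lower_bound \<epsilon> s) \<le> ennreal ((1 - s)\<^sup>2) * gagliardo_sq ((1 + s) / 2) (ball 0 1) u_star"
proof -
  have rescale: "t\<^sup>2 * (P / (d * t) * (2 * pi * Q / t)) = 2 * pi * (P / d) * Q" if "t \<noteq> 0" for t d P Q :: real
    using that by (simp add: field_simps power2_eq_square)
  have "ennreal (u_star_energy_lower_bound \<epsilon> s)
      = ennreal ((1 - s)\<^sup>2) * ennreal (pi * \<epsilon> powr (1 - s) / ((1 + \<epsilon>)\<^sup>2 * (1 - s))
            * (2 * pi * (1 / (1 + \<epsilon>)) powr (1 - s) / (1 - s)))"
    using s rescale[of "1 - s"] by (simp add: u_star_energy_lower_bound_def flip: ennreal_mult')
  also have "\<dots> \<le> ennreal ((1 - s)\<^sup>2) * gagliardo_sq ((1 + s) / 2) (ball 0 1) u_star"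
    by (rule mult_left_mono[OF gagliardo_sq_u_star_ge[OF s \<epsilon>]]) simp
  finally show ?thesis .
qed

lemma tendsto_u_star_energy_upper_bound:
  "0 < \<epsilon> \<Longrightarrow> \<epsilon> < 1 \<Longrightarrow> (u_star_energy_upper_bound \<epsilon> \<longlongrightarrow> 2 * pi\<^sup>2 / (1 - \<epsilon>)\<^sup>2) (at_left 1)"
  unfolding u_star_energy_upper_bound_def
  by (intro tendsto_eq_intros) (auto simp: power2_eq_square)

lemma tendsto_u_star_energy_lower_bound:
  "0 < \<epsilon> \<Longrightarrow> (u_star_energy_lower_bound \<epsilon> \<longlongrightarrow> 2 * pi\<^sup>2 / (1 + \<epsilon>)\<^sup>2) (at_left 1)"
  unfolding u_star_energy_lower_bound_def
  by (intro tendsto_eq_intros) (auto simp: power2_eq_square)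

lemma tendsto_sandwich_family:
  fixes f :: "'a \<Rightarrow> 'b::linorder_topology"
  assumes lower: "\<forall>\<^sub>F \<epsilon> in G. (\<forall>\<^sub>F x in F. lo \<epsilon> x \<le> f x) \<and> (lo \<epsilon> \<longlongrightarrow> l \<epsilon>) F"
    and upper: "\<forall>\<^sub>F \<epsilon> in G. (\<forall>\<^sub>F x in F. f x \<le> up \<epsilon> x) \<and> (up \<epsilon> \<longlongrightarrow> u \<epsilon>) F"
    and l: "(l \<longlongrightarrow> c) G" and u: "(u \<longlongrightarrow> c) G" and G: "G \<noteq> bot"
  shows "(f \<longlongrightarrow> c) F"
proof (rule order_tendstoI)
  fix a assume "a < c"
  have "\<forall>\<^sub>F \<epsilon> in G. a < l \<epsilon> \<and> (\<forall>\<^sub>F x in F. lo \<epsilon> x \<le> f x) \<and> (lo \<epsilon> \<longlongrightarrow> l \<epsilon>) F"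
    using order_tendstoD(1)[OF l \<open>a < c\<close>] lower by (rule eventually_conj)
  then obtain \<epsilon> where "a < l \<epsilon>" "\<forall>\<^sub>F x in F. lo \<epsilon> x \<le> f x" "(lo \<epsilon> \<longlongrightarrow> l \<epsilon>) F"
    using eventually_happens'[OF G] by blast
  from order_tendstoD(1)[OF this(3,1)] this(2) show "\<forall>\<^sub>F x in F. a < f x"
    by eventually_elim (rule less_le_trans)
next
  fix a assume "c < a"
  have "\<forall>\<^sub>F \<epsilon> in G. u \<epsilon> < a \<and> (\<forall>\<^sub>F x in F. f x \<le> up \<epsilon> x) \<and> (up \<epsilon> \<longlongrightarrow> u \<epsilon>) F"
    using order_tendstoD(2)[OF u \<open>c < a\<close>] upper by (rule eventually_conj)
  then obtain \<epsilon> where "u \<epsilon> < a" "\<forall>\<^sub>F x in F. f x \<le> up \<epsilon> x" "(up \<epsilon> \<longlongrightarrow> u \<epsilon>) F"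
    using eventually_happens'[OF G] by blast
  from order_tendstoD(2)[OF this(3,1)] this(2) show "\<forall>\<^sub>F x in F. f x < a"
    by eventually_elim (rule le_less_trans)
qed

theorem lemmaA1:
  shows "((\<lambda>s::real. ennreal ((1 - s)\<^sup>2) * gagliardo_sq ((1 + s) / 2) (ball 0 1) u_star)
           \<longlongrightarrow> ennreal (2 * pi\<^sup>2)) (at_left 1)"
proof (rule tendsto_sandwich_family[where G = "at_right 0"
      and lo = "\<lambda>\<epsilon> s. ennreal (u_star_energy_lower_bound \<epsilon> s)" and l = "\<lambda>\<epsilon>. ennreal (2 * pi\<^sup>2 / (1 + \<epsilon>)\<^sup>2)"
      and up = "\<lambda>\<epsilon> s. ennreal (u_star_energy_upper_bound \<epsilon> s)" and u = "\<lambda>\<epsilon>. ennreal (2 * pi\<^sup>2 / (1 - \<epsilon>)\<^sup>2)"])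
  have s_near_1: "\<forall>\<^sub>F s in at_left 1. - 1 < s \<and> s < (1::real)"
    using eventually_at_left_real[of "- 1" 1] by simp
  have \<epsilon>_small: "\<forall>\<^sub>F \<epsilon> in at_right 0. 0 < \<epsilon> \<and> \<epsilon> < (1::real)"
    using eventually_at_right_real[of 0 1] by simp
  show "\<forall>\<^sub>F \<epsilon> in at_right 0.
      (\<forall>\<^sub>F s in at_left 1. ennreal (u_star_energy_lower_bound \<epsilon> s) \<le> ennreal ((1 - s)\<^sup>2) * gagliardo_sq ((1 + s) / 2) (ball 0 1) u_star)
      \<and> ((\<lambda>s. ennreal (u_star_energy_lower_bound \<epsilon> s)) \<longlongrightarrow> ennreal (2 * pi\<^sup>2 / (1 + \<epsilon>)\<^sup>2)) (at_left 1)"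
    using \<epsilon>_small by eventually_elim
      (auto intro!: tendsto_ennrealI tendsto_u_star_energy_lower_bound u_star_energy_ge_lower_bound
        eventually_mono[OF s_near_1])
  show "\<forall>\<^sub>F \<epsilon> in at_right 0.
      (\<forall>\<^sub>F s in at_left 1. ennreal ((1 - s)\<^sup>2) * gagliardo_sq ((1 + s) / 2) (ball 0 1) u_star \<le> ennreal (u_star_energy_upper_bound \<epsilon> s))
      \<and> ((\<lambda>s. ennreal (u_star_energy_upper_bound \<epsilon> s)) \<longlongrightarrow> ennreal (2 * pi\<^sup>2 / (1 - \<epsilon>)\<^sup>2)) (at_left 1)"
    using \<epsilon>_small by eventually_elim
      (auto intro!: tendsto_ennrealI tendsto_u_star_energy_upper_bound u_star_energy_le_upper_bound
        eventually_mono[OF s_near_1])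
  show "((\<lambda>\<epsilon>. ennreal (2 * pi\<^sup>2 / (1 + \<epsilon>)\<^sup>2)) \<longlongrightarrow> ennreal (2 * pi\<^sup>2)) (at_right 0)"
    "((\<lambda>\<epsilon>. ennreal (2 * pi\<^sup>2 / (1 - \<epsilon>)\<^sup>2)) \<longlongrightarrow> ennreal (2 * pi\<^sup>2)) (at_right 0)"
    by (auto intro!: tendsto_ennrealI tendsto_eq_intros)
qed simp

end
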